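(* Let $\mathcal L$ be a choice logic, $V\subseteq\mathcal U$ a finite set of propositional variables, and $s:\mathcal P(V)\to \mathrm{Obt}(\mathcal L)$ any function. Then there is an $\mathcal L$-formula $F$ such that $\deg_{\mathcal L}(\mathcal I,F)=s(\mathcal I)$ for every $\mathcal I\subseteq V$.
   Context: Fix a countably infinite set $\mathcal U$ of propositional variables. Let $\mathbb N=\{1,2,3,\dots\}$ and $\overline{\mathbb N}=\mathbb N\cup\{\infty\}$, with $n<\infty$ for all $n\in\mathbb N$. An interpretation is a set $\mathcal I\subseteq\mathcal U$ (the variables set to true). A choice logic $\mathcal L$ is specified by a finite set $C_{\mathcal L}$ of binary connective symbols disjoint from $\{\neg,\land,\lor\}$ and, for each $\circ\in C_{\mathcal L}$, a function $\mathrm{opt}_\circ:\mathbb N^2\to\mathbb N$ with $\mathrm{opt}_\circ(k,\ell)\le (k+1)(\ell+1)$ for all $k,\ell$, and a function $\deg_\circ:\mathbb N^2\times\overline{\mathbb N}^2\to\overline{\mathbb N}$ such that for all $k,\ell\in\mathbb N$, $m,n\in\overline{\mathbb N}$, either $\deg_\circ(k,\ell,m,n)\le \mathrm{opt}_\circ(k,\ell)$ or $\deg_\circ(k,\ell,m,n)=\infty$. The $\mathcal L$-formulas are built from variables in $\mathcal U$ using unary $\neg$ and binary $\land,\lor$ and the connectives in $C_{\mathcal L}$. The optionality $\mathrm{opt}_{\mathcal L}$ of formulas is defined by: $\mathrm{opt}_{\mathcal L}(a)=1$ for $a\in\mathcal U$; $\mathrm{opt}_{\mathcal L}(\neg F)=1$;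 $\mathrm{opt}_{\mathcal L}(F\land G)=\mathrm{opt}_{\mathcal L}(F\lor G)=\max(\mathrm{opt}_{\mathcal L}(F),\mathrm{opt}_{\mathcal L}(G))$; $\mathrm{opt}_{\mathcal L}(F\circ G)=\mathrm{opt}_\circ(\mathrm{opt}_{\mathcal L}(F),\mathrm{opt}_{\mathcal L}(G))$ for $\circ\in C_{\mathcal L}$. The satisfaction degree $\deg_{\mathcal L}(\mathcal I,F)\in\overline{\mathbb N}$ is defined by: $\deg_{\mathcal L}(\mathcal I,a)=1$ if $a\in\mathcal I$ and $\infty$ otherwise; $\deg_{\mathcal L}(\mathcal I,\neg F)=1$ if $\deg_{\mathcal L}(\mathcal I,F)=\infty$ and $\infty$ otherwise; $\deg_{\mathcal L}(\mathcal I,F\land G)=\max(\deg_{\mathcal L}(\mathcal I,F),\deg_{\mathcal L}(\mathcal I,G))$; $\deg_{\mathcal L}(\mathcal I,F\lor G)=\min(\deg_{\mathcal L}(\mathcal I,F),\deg_{\mathcal L}(\mathcal I,G))$; $\deg_{\mathcal L}(\mathcal I,F\circ G)=\deg_\circ(\mathrm{opt}_{\mathcal L}(F),\mathrm{opt}_{\mathcal L}(G),\deg_{\mathcal L}(\mathcal I,F),\deg_{\mathcal L}(\mathcal I,G))$ for $\circ\in C_{\mathcal L}$. A degree $m\in\overline{\mathbb N}$ is obtainable in $\mathcal L$ if there exist an interpretation $\mathcal I$ and an $\mathcal L$-formula $G$ with $\deg_{\mathcal L}(\mathcal I,G)=m$; $\mathrm{Obt}(\mathcal L)$ denotes the set of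 obtainable degrees. $\mathcal P(V)$ is the power set of $V$. *)

theory Defs
  imports Main "HOL-Library.Extended_Nat"
begin

text \<open>Propositional variables: the countably infinite set U is modelled by nat.
Degrees in N-bar = {1,2,...} \<union> {\<infinity>} are modelled by enat values \<ge> 1.
Connective symbols are elements of a set C of an arbitrary type 'c.\<close>

datatype 'c cformula =
    Atom nat
  | Neg "'c cformula"
  | Conj "'c cformula" "'c cformula"
  | Disj "'c cformula" "'c cformula"
  | Op 'c "'c cformula" "'c cformula"

fun conns :: "'c cformula \<Rightarrow> 'c set" where
  "conns (Atom a) = {}"
| "conns (Neg F) = conns F"
| "conns (Conj F G) = conns F \<union> conns G"
| "conns (Disj F G) = conns F \<union> conns G"
| "conns (Op c F G) = insert c (conns F \<union> conns G)"

definition is_formula :: "'c set \<Rightarrow> 'c cformula \<Rightarrow> bool" where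
  "is_formula C F \<longleftrightarrow> conns F \<subseteq> C"

definition choice_logic ::
  "'c set \<Rightarrow> ('c \<Rightarrow> nat \<Rightarrow> nat \<Rightarrow> nat) \<Rightarrow> ('c \<Rightarrow> nat \<Rightarrow> nat \<Rightarrow> enat \<Rightarrow> enat \<Rightarrow> enat) \<Rightarrow> bool" where
  "choice_logic C opt deg \<longleftrightarrow> finite C
     \<and> (\<forall>c\<in>C. \<forall>k\<ge>1. \<forall>l\<ge>1. 1 \<le> opt c k l \<and> opt c k l \<le> (k + 1) * (l + 1))
     \<and> (\<forall>c\<in>C. \<forall>k\<ge>1. \<forall>l\<ge>1. \<forall>m\<ge>1. \<forall>n\<ge>1.
          1 \<le> deg c k l m n \<and> (deg c k l m n \<le> enat (opt c k l) \<or> deg c k l m n = \<infinity>))"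

fun optL :: "('c \<Rightarrow> nat \<Rightarrow> nat \<Rightarrow> nat) \<Rightarrow> 'c cformula \<Rightarrow> nat" where
  "optL opt (Atom a) = 1"
| "optL opt (Neg F) = 1"
| "optL opt (Conj F G) = max (optL opt F) (optL opt G)"
| "optL opt (Disj F G) = max (optL opt F) (optL opt G)"
| "optL opt (Op c F G) = opt c (optL opt F) (optL opt G)"

fun degL :: "('c \<Rightarrow> nat \<Rightarrow> nat \<Rightarrow> nat) \<Rightarrow> ('c \<Rightarrow> nat \<Rightarrow> nat \<Rightarrow> enat \<Rightarrow> enat \<Rightarrow> enat)
             \<Rightarrow> nat set \<Rightarrow> 'c cformula \<Rightarrow> enat" where
  "degL opt deg I (Atom a) = (if a \<in> I then 1 else \<infinity>)"
| "degL opt deg I (Neg F) = (if degL opt deg I F = \<infinity> then 1 else \<infinity>)"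
| "degL opt deg I (Conj F G) = max (degL opt deg I F) (degL opt deg I G)"
| "degL opt deg I (Disj F G) = min (degL opt deg I F) (degL opt deg I G)"
| "degL opt deg I (Op c F G) =
     deg c (optL opt F) (optL opt G) (degL opt deg I F) (degL opt deg I G)"

definition Obt :: "'c set \<Rightarrow> ('c \<Rightarrow> nat \<Rightarrow> nat \<Rightarrow> nat) \<Rightarrow> ('c \<Rightarrow> nat \<Rightarrow> nat \<Rightarrow> enat \<Rightarrow> enat \<Rightarrow> enat) \<Rightarrow> enat set" where
  "Obt C opt deg = {m. \<exists>I G. is_formula C G \<and> degL opt deg I G = m}"

end

theory Submission
  imports Defs
begin

text \<open>Every obtainable degree is the degree of a formula whose value does not depend on the
interpretation: replace each atom of a witness formula by the tautology or the contradiction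
it evaluates to. A function on \<open>\<P>(V)\<close> is then realised by Shannon expansion
\<open>(x \<and> F\<^sub>1) \<or> (\<not>x \<and> F\<^sub>0)\<close> along the variables of \<open>V\<close>. The expansion is
faithful because all degrees are at least 1, while \<open>x\<close> and \<open>\<not>x\<close> have degree 1 or \<open>\<infinity>\<close>.\<close>

definition ctrue :: "'c cformula" where
  "ctrue = Disj (Atom 0) (Neg (Atom 0))"

definition cfalse :: "'c cformula" where
  "cfalse = Conj (Atom 0) (Neg (Atom 0))"

fun ground :: "nat set \<Rightarrow> 'c cformula \<Rightarrow> 'c cformula" where
  "ground J (Atom a) = (if a \<in> J then ctrue else cfalse)"
| "ground J (Neg F) = Neg (ground J F)"
| "ground J (Conj F G) = Conj (ground J F) (ground J G)"
| "ground J (Disj F G) = Disj (ground J F) (ground J G)"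
| "ground J (Op c F G) = Op c (ground J F) (ground J G)"

lemma conns_ground [simp]: "conns (ground J F) = conns F"
  by (induction F) (auto simp: ctrue_def cfalse_def)

lemma optL_ground [simp]: "optL opt (ground J F) = optL opt F"
  by (induction F) (auto simp: ctrue_def cfalse_def)

lemma degL_ground: "degL opt deg I (ground J F) = degL opt deg J F"
  by (induction F) (auto simp: ctrue_def cfalse_def)

lemma Obt_constant_formula:
  assumes "m \<in> Obt C opt deg"
  obtains G where "is_formula C G" "\<And>I. degL opt deg I G = m"
proof -
  obtain J G where "is_formula C G" "degL opt deg J G = m"
    using assms unfolding Obt_def by blast
  then show thesis
    by (intro that[of "ground J G"]) (auto simp: is_formula_def degL_ground)
qed

lemma optL_ge_1:
  assumes "choice_logic C opt deg" "is_formula C F"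
  shows "1 \<le> optL opt F"
  using assms(2) by (induction F) (use assms(1) in \<open>auto simp: choice_logic_def is_formula_def\<close>)

lemma degL_ge_1:
  assumes "choice_logic C opt deg" "is_formula C F"
  shows "1 \<le> degL opt deg I F"
  using assms(2)
proof (induction F)
  case (Op c F G)
  then have "c \<in> C" "is_formula C F" "is_formula C G"
    by (auto simp: is_formula_def)
  with Op.IH show ?case
    using optL_ge_1[OF assms(1), of F] optL_ge_1[OF assms(1), of G] assms(1)
    by (auto simp: choice_logic_def)
qed (auto simp: is_formula_def min_def max_def)

definition if_atom :: "nat \<Rightarrow> 'c cformula \<Rightarrow> 'c cformula \<Rightarrow> 'c cformula" where
  "if_atom x F\<^sub>1 F\<^sub>0 = Disj (Conj (Atom x) F\<^sub>1) (Conj (Neg (Atom x)) F\<^sub>0)"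

lemma is_formula_if_atom:
  "is_formula C (if_atom x F\<^sub>1 F\<^sub>0) \<longleftrightarrow> is_formula C F\<^sub>1 \<and> is_formula C F\<^sub>0"
  by (auto simp: if_atom_def is_formula_def)

lemma degL_if_atom:
  assumes "1 \<le> degL opt deg I F\<^sub>1" "1 \<le> degL opt deg I F\<^sub>0"
  shows "degL opt deg I (if_atom x F\<^sub>1 F\<^sub>0) =
           (if x \<in> I then degL opt deg I F\<^sub>1 else degL opt deg I F\<^sub>0)"
  using assms by (auto simp: if_atom_def max_def min_def)

lemma formula_realising_degrees:
  assumes "choice_logic C opt deg" "finite V"
    and "\<forall>I. I \<subseteq> V \<longrightarrow> s I \<in> Obt C opt deg"
  shows "\<exists>F. is_formula C F \<and> (\<forall>I. degL opt deg I F = s (I \<inter> V))"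
  using assms(2,3)
proof (induction V arbitrary: s rule: finite_induct)
  case empty
  then obtain G where "is_formula C G" "\<And>I. degL opt deg I G = s {}"
    using Obt_constant_formula by blast
  then show ?case by auto
next
  case (insert x V)
  obtain F\<^sub>1 where F\<^sub>1: "is_formula C F\<^sub>1" "\<forall>I. degL opt deg I F\<^sub>1 = s (insert x (I \<inter> V))"
    using insert.IH[of "\<lambda>I. s (insert x I)"] insert.prems by blast
  obtain F\<^sub>0 where F\<^sub>0: "is_formula C F\<^sub>0" "\<forall>I. degL opt deg I F\<^sub>0 = s (I \<inter> V)"
    using insert.IH[of s] insert.prems by blast
  have "degL opt deg I (if_atom x F\<^sub>1 F\<^sub>0) = s (I \<inter> insert x V)" for I
  proof -
    have "degL opt deg I (if_atom x F\<^sub>1 F\<^sub>0) =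
            (if x \<in> I then degL opt deg I F\<^sub>1 else degL opt deg I F\<^sub>0)"
      using degL_if_atom degL_ge_1[OF assms(1)] F\<^sub>1(1) F\<^sub>0(1) by blast
    with F\<^sub>1(2) F\<^sub>0(2) show ?thesis
      by (simp add: Int_insert_right)
  qed
  moreover have "is_formula C (if_atom x F\<^sub>1 F\<^sub>0)"
    using F\<^sub>1(1) F\<^sub>0(1) by (simp add: is_formula_if_atom)
  ultimately show ?case
    by blast
qed

theorem mainTheorem4:
  fixes C :: "'c set" and opt :: "'c \<Rightarrow> nat \<Rightarrow> nat \<Rightarrow> nat"
    and deg :: "'c \<Rightarrow> nat \<Rightarrow> nat \<Rightarrow> enat \<Rightarrow> enat \<Rightarrow> enat"
    and V :: "nat set" and s :: "nat set \<Rightarrow> enat"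
  assumes "choice_logic C opt deg"
    and "finite V"
    and "\<forall>I. I \<subseteq> V \<longrightarrow> s I \<in> Obt C opt deg"
  shows "\<exists>F. is_formula C F \<and> (\<forall>I. I \<subseteq> V \<longrightarrow> degL opt deg I F = s I)"
proof -
  obtain F where "is_formula C F" "\<forall>I. degL opt deg I F = s (I \<inter> V)"
    using formula_realising_degrees[OF assms] by blast
  then show ?thesis
    by (metis Int_absorb2)
qed

end
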